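(* With the icosahedral setting of the context, let $\omega>0$, $n\ge2$ and $y\in\mathcal{I}$. Then \[ w_n(x;y)=\sum_{j=0}^{\lfloor n/2\rfloor}\left(-\frac{\tau+2}{4\omega}\right)^j\frac{1}{(15\kappa+\tfrac32+n-2j)_j}\,\frac{\nu(n)}{\nu(n-2j)}\,L_j^{(15\kappa+1/2+n-2j)}\left(\omega|x|^2\right)\phi_{n-2j}(x;y). \]
   Context: Let $\tau=(1+\sqrt5)/2$. Vectors in $\mathbb{R}^3$ are row vectors; $\langle x,y\rangle=\sum x_iy_i$, $|x|^2=\langle x,x\rangle$. Let $\kappa\ge0$ be real. Let $\mathcal{I}=\{(0,\pm\tau,\pm1),(\pm1,0,\pm\tau),(\pm\tau,\pm1,0)\}$. For $y_0\in\mathcal{I}$, $q_n(x;y_0)$ are defined by $\left(1-r\langle x,y_0\rangle\right)^{-1}\prod_{y\in\mathcal{I}}\left(1-r\langle x,y\rangle\right)^{-\kappa}=\sum_{n\ge0}q_n(x;y_0)r^n$. $\nu(n)=2^n(6\kappa+1)_s(5\kappa+\tfrac12)_t$ with $s=\lfloor n/2\rfloor$, $t=\lfloor (n+1)/2\rfloor$, $(a)_k=a(a+1)\cdots(a+k-1)$. For $n\ge0$ define $w_n(x;y_0)=\sum_{j=0}^{\lfloor n/2\rfloor}(-1)^j\frac{(\tau+2)^j}{(4\omega)^jj!}\frac{\nu(n)}{\nu(n-2j)}q_{n-2j}(x;y_0)$ and $\phi_n(x;y_0)=\sum_{j=0}^{\lfloor n/2\rfloor}\frac{(\tau+2)^j|x|^{2j}}{4^jj!\,(-15\kappa-n+1/2)_j}\frac{\nu(n)}{\nu(n-2j)}q_{n-2j}(x;y_0)$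 (so $\phi_0=1$). The Laguerre polynomial is $L_m^{(\alpha)}(s)=\frac{(\alpha+1)_m}{m!}\sum_{j=0}^m\frac{(-m)_j}{(\alpha+1)_j}\frac{s^j}{j!}$. *)

theory Defs
  imports "HOL-Analysis.Analysis" "HOL-Computational_Algebra.Formal_Power_Series"
begin

definition tau :: real where "tau = (1 + sqrt 5) / 2"

definition icos :: "(real^3) set" where
  "icos = {vector [0, s * tau, t] | s t. s \<in> {-1, 1} \<and> t \<in> {-1, 1}}
        \<union> {vector [s, 0, t * tau] | s t. s \<in> {-1, 1} \<and> t \<in> {-1, 1}}
        \<union> {vector [s * tau, t, 0] | s t. s \<in> {-1, 1} \<and> t \<in> {-1, 1}}"

text \<open>Generating function (1 - r<x,y0>)^(-1) * prod_{y in I} (1 - r<x,y>)^(-kappa) as a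
  formal power series in r; (1 - b r)^(-kappa) is the binomial series (1+X)^(-kappa)
  composed with -b X.\<close>
definition qgen :: "real \<Rightarrow> real^3 \<Rightarrow> real^3 \<Rightarrow> real fps" where
  "qgen \<kappa> x y0 = inverse (1 - fps_const (x \<bullet> y0) * fps_X) *
     (\<Prod>y\<in>icos. fps_binomial (- \<kappa>) oo (fps_const (- (x \<bullet> y)) * fps_X))"

definition q :: "real \<Rightarrow> nat \<Rightarrow> real^3 \<Rightarrow> real^3 \<Rightarrow> real" where
  "q \<kappa> n x y0 = fps_nth (qgen \<kappa> x y0) n"

definition nu :: "real \<Rightarrow> nat \<Rightarrow> real" where
  "nu \<kappa> n = 2 ^ n * pochhammer (6 * \<kappa> + 1) (n div 2) * pochhammer (5 * \<kappa> + 1/2) ((n + 1) div 2)"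

definition w :: "real \<Rightarrow> real \<Rightarrow> nat \<Rightarrow> real^3 \<Rightarrow> real^3 \<Rightarrow> real" where
  "w \<kappa> \<omega> n x y0 = (\<Sum>j = 0..n div 2. (-1) ^ j * (tau + 2) ^ j / ((4 * \<omega>) ^ j * fact j)
       * (nu \<kappa> n / nu \<kappa> (n - 2 * j)) * q \<kappa> (n - 2 * j) x y0)"

definition phi :: "real \<Rightarrow> nat \<Rightarrow> real^3 \<Rightarrow> real^3 \<Rightarrow> real" where
  "phi \<kappa> n x y0 = (\<Sum>j = 0..n div 2. (tau + 2) ^ j * (norm x ^ 2) ^ j
       / (4 ^ j * fact j * pochhammer (- 15 * \<kappa> - real n + 1/2) j)
       * (nu \<kappa> n / nu \<kappa> (n - 2 * j)) * q \<kappa> (n - 2 * j) x y0)"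

definition laguerre :: "nat \<Rightarrow> real \<Rightarrow> real \<Rightarrow> real" where
  "laguerre m \<alpha> s = pochhammer (\<alpha> + 1) m / fact m *
     (\<Sum>j = 0..m. pochhammer (- real m) j / pochhammer (\<alpha> + 1) j * s ^ j / fact j)"

end

theory Submission
  imports Defs
begin

text \<open>
  Nothing about the icosahedron is used: both sides are linear combinations of the numbers
  q_(n-2k)(x;y) / \<nu>(n-2k), and the identity holds coefficientwise for an arbitrary sequence q.
  Put c = -(\<tau>+2)/(4\<omega>) and s = \<omega>|x|^2. Expanding every \<phi>_(n-2j) back into the q's and collecting
  terms along antidiagonals, the coefficient of c^k q_(n-2k) / \<nu>(n-2k) on the right becomes a
  convolution of the Laguerre polynomials L_j(s), whose parameters drop by 2 as j grows, with the
  coefficients of \<phi>. After expanding the Laguerre polynomials as well, it equals 1/k! by the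
  identity \<Sum>_p 1 / (p! (m-p)! (1-\<gamma>-2p)_p (\<gamma>+2p+1)_(m-p)) = [m = 0] for \<gamma> > 0, whose terms
  telescope.
\<close>

lemma pochhammer_minus_of_nat:
  assumes "l \<le> j"
  shows "pochhammer (- of_nat j) l = (-1) ^ l * fact j / (fact (j - l) :: 'a :: field_char_0)"
proof -
  have "fact j = fact (j - l) * pochhammer (of_nat (j - l) + 1 :: 'a) l"
    using pochhammer_product'[of "1 :: 'a" "j - l" l] assms
    by (simp add: pochhammer_fact add.commute)
  then show ?thesis
    using assms by (simp add: pochhammer_minus of_nat_diff)
qed

lemma laguerre_div_pochhammer:
  fixes \<alpha> s :: real
  assumes "\<alpha> > -1"
  shows "laguerre m \<alpha> s / pochhammer (\<alpha> + 1) m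
    = (\<Sum>l=0..m. (-s) ^ l / (fact (m - l) * fact l * pochhammer (\<alpha> + 1) l))"
proof -
  have poch_pos: "pochhammer (\<alpha> + 1) l > 0" for l
    using assms by (intro pochhammer_pos) simp
  have "laguerre m \<alpha> s / pochhammer (\<alpha> + 1) m
      = (\<Sum>l=0..m. pochhammer (- real m) l / pochhammer (\<alpha> + 1) l * s ^ l / fact l / fact m)"
    unfolding laguerre_def using poch_pos[of m] by (simp add: sum_divide_distrib)
  also have "\<dots> = (\<Sum>l=0..m. (-s) ^ l / (fact (m - l) * fact l * pochhammer (\<alpha> + 1) l))"
    by (intro sum.cong refl) (simp add: pochhammer_minus_of_nat power_minus[of s])
  finally show ?thesis .
qed

lemma pochhammer_split_fraction:
  fixes x a :: "'a :: field"
  assumes "pochhammer x (Suc m) \<noteq> 0"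
  shows "a / pochhammer x m + (of_nat m - a) / pochhammer (x + 1) m
    = of_nat m * (x + a) / pochhammer x (Suc m)"
proof -
  have left: "pochhammer x (Suc m) = pochhammer x m * (x + of_nat m)"
    by (simp add: pochhammer_rec' mult.commute)
  have right: "pochhammer x (Suc m) = x * pochhammer (x + 1) m"
    by (rule pochhammer_rec)
  have "a / pochhammer x m = a * (x + of_nat m) / pochhammer x (Suc m)"
    using assms unfolding left by simp
  moreover have "(of_nat m - a) / pochhammer (x + 1) m = (of_nat m - a) * x / pochhammer x (Suc m)"
    using assms unfolding right by simp
  ultimately show ?thesis
    by (simp add: add_divide_distrib[symmetric] algebra_simps)
qed

lemma pochhammer_reflection_product:
  fixes \<gamma> :: "'a :: comm_ring_1"
  assumes "p \<le> m"
  shows "pochhammer (1 - (\<gamma> + 2 * of_nat p)) p * ((\<gamma> + 2 * of_nat p) * pochhammer (\<gamma> + 2 * of_nat p + 1) (m - p))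
    = (-1) ^ p * pochhammer (\<gamma> + of_nat p) (Suc m)"
proof -
  have "pochhammer (1 - (\<gamma> + 2 * of_nat p)) p = (-1) ^ p * pochhammer (\<gamma> + of_nat p) p"
    using pochhammer_minus[of "\<gamma> + 2 * of_nat p - 1" p] by (simp add: algebra_simps)
  moreover have "(\<gamma> + 2 * of_nat p) * pochhammer (\<gamma> + 2 * of_nat p + 1) (m - p)
      = pochhammer (\<gamma> + of_nat p + of_nat p) (Suc m - p)"
    using assms by (simp add: Suc_diff_le pochhammer_rec algebra_simps)
  moreover have "pochhammer (\<gamma> + of_nat p) (Suc m)
      = pochhammer (\<gamma> + of_nat p) p * pochhammer (\<gamma> + of_nat p + of_nat p) (Suc m - p)"
    using assms by (intro pochhammer_product) simp
  ultimately show ?thesis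
    by simp
qed

lemma reciprocal_pochhammer_product_eq:
  fixes \<gamma> :: real
  assumes "\<gamma> > 0" and "p \<le> m"
  shows "1 / (fact p * fact (m - p) * pochhammer (1 - (\<gamma> + 2 * real p)) p
              * pochhammer (\<gamma> + 2 * real p + 1) (m - p))
    = (-1) ^ p / (fact p * fact (m - p)) * ((\<gamma> + 2 * real p) / pochhammer (\<gamma> + real p) (Suc m))"
proof -
  define g where "g = \<gamma> + 2 * real p"
  define R where "R = pochhammer (1 - g) p * pochhammer (g + 1) (m - p)"
  have reflection: "pochhammer (\<gamma> + real p) (Suc m) = (-1) ^ p * (g * R)"
    using arg_cong[OF pochhammer_reflection_product[OF \<open>p \<le> m\<close>, of \<gamma>], of "(*) ((-1) ^ p)"]
    unfolding R_def g_def by (simp add: mult_ac)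
  moreover have "pochhammer (\<gamma> + real p) (Suc m) > 0"
    using assms by (intro pochhammer_pos) simp
  ultimately have "R \<noteq> 0" and "g \<noteq> 0"
    by auto
  then have "1 / (fact p * fact (m - p) * R) = (-1) ^ p / (fact p * fact (m - p)) * (g / ((-1) ^ p * (g * R)))"
    by (simp add: field_simps)
  then show ?thesis
    unfolding reflection[symmetric] unfolding R_def g_def by (simp add: mult.assoc)
qed

lemma reciprocal_pochhammer_product_telescopes:
  fixes \<gamma> :: real
  assumes "\<gamma> > 0" and "p \<le> m"
  \<comment> \<open>The guard makes \<open>H (Suc m)\<close> vanish; without it \<open>fact (m - Suc m)\<close> would be \<open>fact 0\<close>.\<close>
  defines "H \<equiv> \<lambda>p. if p \<le> m
    then (-1) ^ p * real p / (fact p * fact (m - p) * pochhammer (\<gamma> + real p) m) else 0"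
  shows "real m / (fact p * fact (m - p) * pochhammer (1 - (\<gamma> + 2 * real p)) p
                    * pochhammer (\<gamma> + 2 * real p + 1) (m - p))
    = H p - H (Suc p)"
proof -
  define C where "C = (-1) ^ p / (fact p * fact (m - p) :: real)"
  have poch_pos: "pochhammer (\<gamma> + real p) (Suc m) > 0"
    using assms by (intro pochhammer_pos) simp
  have "real m / (fact p * fact (m - p) * pochhammer (1 - (\<gamma> + 2 * real p)) p
                    * pochhammer (\<gamma> + 2 * real p + 1) (m - p))
      = real m * (1 / (fact p * fact (m - p) * pochhammer (1 - (\<gamma> + 2 * real p)) p
                    * pochhammer (\<gamma> + 2 * real p + 1) (m - p)))"
    by simp
  also have "\<dots> = C * (real m * (\<gamma> + real p + real p) / pochhammer (\<gamma> + real p) (Suc m))"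
    unfolding reciprocal_pochhammer_product_eq[OF assms(1,2)] C_def by (simp add: add.assoc)
  also have "\<dots> = C * (real p / pochhammer (\<gamma> + real p) m
      + (real m - real p) / pochhammer (\<gamma> + real p + 1) m)"
    using pochhammer_split_fraction[of "\<gamma> + real p" m "real p"] poch_pos by simp
  also have "\<dots> = H p - H (Suc p)"
  proof -
    have "H p = C * (real p / pochhammer (\<gamma> + real p) m)"
      using assms(2) by (simp add: H_def C_def)
    moreover have "H (Suc p) = - C * ((real m - real p) / pochhammer (\<gamma> + real p + 1) m)"
    proof (cases "p = m")
      case True
      then show ?thesis by (simp add: H_def)
    next
      case False
      have "H (Suc p) = - ((-1) ^ p / (fact p * fact (m - Suc p) * pochhammer (\<gamma> + real p + 1) m))"
        using assms(2) False by (simp add: H_def add_ac)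
      moreover have "fact (m - p) = (real m - real p) * fact (m - Suc p)"
        using assms(2) False by (simp add: fact_reduce)
      moreover have "real m - real p \<noteq> 0"
        using False by simp
      ultimately show ?thesis
        unfolding C_def by simp
    qed
    ultimately show ?thesis
      by (simp add: distrib_left)
  qed
  finally show ?thesis .
qed

lemma sum_reciprocal_pochhammer_products:
  fixes \<gamma> :: real
  assumes "\<gamma> > 0"
  shows "(\<Sum>p=0..m. 1 / (fact p * fact (m - p) * pochhammer (1 - (\<gamma> + 2 * real p)) p
                          * pochhammer (\<gamma> + 2 * real p + 1) (m - p)))
    = (if m = 0 then 1 else 0)"
proof (cases "m = 0")
  case True
  then show ?thesis by simp
next
  case False
  define H where "H p = (if p \<le> m
    then (-1) ^ p * real p / (fact p * fact (m - p) * pochhammer (\<gamma> + real p) m) else 0)" for p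
  have "real m * (\<Sum>p=0..m. 1 / (fact p * fact (m - p) * pochhammer (1 - (\<gamma> + 2 * real p)) p
                          * pochhammer (\<gamma> + 2 * real p + 1) (m - p)))
      = (\<Sum>p=0..m. H p - H (Suc p))"
    unfolding sum_distrib_left H_def using assms
    by (intro sum.cong refl) (simp add: reciprocal_pochhammer_product_telescopes)
  also have "\<dots> = 0"
    using sum_telescope[of H m] by (simp add: atLeast0AtMost H_def)
  finally show ?thesis
    using False by simp
qed

lemma sum_triangle_antidiagonals:
  fixes f :: "nat \<Rightarrow> nat \<Rightarrow> 'a :: comm_monoid_add"
  shows "(\<Sum>j=0..N. \<Sum>i=0..N-j. f j i) = (\<Sum>k=0..N. \<Sum>j=0..k. f j (k - j))"
proof -
  have "{(j, i). j + i \<le> N} = Sigma {0..N} (\<lambda>j. {0..N-j})"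
    by auto
  then have "(\<Sum>j=0..N. \<Sum>i=0..N-j. f j i) = (\<Sum>(j, i)\<in>{(j, i). j + i \<le> N}. f j i)"
    by (simp add: sum.Sigma)
  also have "\<dots> = (\<Sum>k\<le>N. \<Sum>j\<le>k. f j (k - j))"
    by (rule sum.triangle_reindex_eq)
  finally show ?thesis
    by (simp add: atLeast0AtMost)
qed

lemma laguerre_inversion_kernel:
  fixes \<gamma> s :: real
  assumes "\<gamma> > 0"
  shows "(\<Sum>p=0..k. (-s) ^ p / (fact p * pochhammer (1 - (\<gamma> + 2 * real p)) p)
      * (laguerre (k - p) (\<gamma> + 2 * real p) s / pochhammer (\<gamma> + 2 * real p + 1) (k - p)))
    = 1 / fact k"
proof -
  define t where "t p l = 1 / (fact p * fact l * pochhammer (1 - (\<gamma> + 2 * real p)) p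
                                * pochhammer (\<gamma> + 2 * real p + 1) l)" for p l
  have "(\<Sum>p=0..k. (-s) ^ p / (fact p * pochhammer (1 - (\<gamma> + 2 * real p)) p)
      * (laguerre (k - p) (\<gamma> + 2 * real p) s / pochhammer (\<gamma> + 2 * real p + 1) (k - p)))
    = (\<Sum>p=0..k. \<Sum>l=0..k-p. (-s) ^ (p + l) / fact (k - (p + l)) * t p l)"
    using assms by (intro sum.cong refl)
      (simp add: laguerre_div_pochhammer sum_distrib_left t_def power_add mult_ac)
  also have "\<dots> = (\<Sum>m=0..k. (-s) ^ m / fact (k - m) * (\<Sum>p=0..m. t p (m - p)))"
    by (simp add: sum_triangle_antidiagonals sum_distrib_left)
  also have "\<dots> = (\<Sum>m=0..k. if m = 0 then 1 / fact k else 0)"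
    using sum_reciprocal_pochhammer_products[OF assms] by (intro sum.cong refl) (simp add: t_def)
  also have "\<dots> = 1 / fact k"
    by simp
  finally show ?thesis .
qed

lemma laguerre_series_inversion:
  fixes \<alpha> a :: "nat \<Rightarrow> real" and c s :: real
  assumes "\<alpha> N > 0" and \<alpha>_step: "\<And>j. j \<le> N \<Longrightarrow> \<alpha> j = \<alpha> N + 2 * real (N - j)"
  shows "(\<Sum>k=0..N. c ^ k / fact k * a k)
    = (\<Sum>j=0..N. c ^ j * (laguerre j (\<alpha> j) s / pochhammer (\<alpha> j + 1) j)
        * (\<Sum>i=0..N-j. (- c * s) ^ i / (fact i * pochhammer (1 - \<alpha> j) i) * a (j + i)))"
proof -
  define G where "G k j = (-s) ^ (k - j) / (fact (k - j) * pochhammer (1 - \<alpha> j) (k - j))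
    * (laguerre j (\<alpha> j) s / pochhammer (\<alpha> j + 1) j)" for k j
  have kernel: "(\<Sum>j=0..k. G k j) = 1 / fact k" if "k \<le> N" for k
  proof -
    have "\<alpha> (k - p) = \<alpha> k + 2 * real p" if "p \<le> k" for p
      using \<alpha>_step[of k] \<alpha>_step[of "k - p"] \<open>k \<le> N\<close> that by simp
    moreover have "\<alpha> k > 0"
      using \<alpha>_step[OF that] assms(1) by simp
    ultimately show ?thesis
      using laguerre_inversion_kernel[of "\<alpha> k" s k] sum.atLeastAtMost_rev[of "G k" 0 k]
      by (simp add: G_def)
  qed
  have "(\<Sum>j=0..N. c ^ j * (laguerre j (\<alpha> j) s / pochhammer (\<alpha> j + 1) j)
        * (\<Sum>i=0..N-j. (- c * s) ^ i / (fact i * pochhammer (1 - \<alpha> j) i) * a (j + i)))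
      = (\<Sum>k=0..N. \<Sum>j=0..k. c ^ j * (laguerre j (\<alpha> j) s / pochhammer (\<alpha> j + 1) j)
        * ((- c * s) ^ (k - j) / (fact (k - j) * pochhammer (1 - \<alpha> j) (k - j)) * a k))"
    by (simp add: sum_distrib_left sum_triangle_antidiagonals)
  also have "\<dots> = (\<Sum>k=0..N. c ^ k * a k * (\<Sum>j=0..k. G k j))"
    unfolding sum_distrib_left
  proof (intro sum.cong refl)
    fix k j :: nat
    assume "j \<in> {0..k}"
    have "c ^ j * (c * (-s)) ^ (k - j) = c ^ (j + (k - j)) * (-s) ^ (k - j)"
      by (simp only: power_mult_distrib power_add mult.assoc)
    with \<open>j \<in> {0..k}\<close> have "c ^ j * (- c * s) ^ (k - j) = c ^ k * (-s) ^ (k - j)"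
      by simp
    then show "c ^ j * (laguerre j (\<alpha> j) s / pochhammer (\<alpha> j + 1) j)
        * ((- c * s) ^ (k - j) / (fact (k - j) * pochhammer (1 - \<alpha> j) (k - j)) * a k)
      = c ^ k * a k * G k j"
      unfolding G_def by (simp add: field_simps)
  qed
  also have "\<dots> = (\<Sum>k=0..N. c ^ k / fact k * a k)"
    using kernel by (intro sum.cong refl) simp
  finally show ?thesis ..
qed

lemma nu_pos: "\<kappa> \<ge> 0 \<Longrightarrow> nu \<kappa> m > 0"
  unfolding nu_def by (intro mult_pos_pos pochhammer_pos) auto

lemma w_eq_nu_sum:
  "w \<kappa> \<omega> n x y = nu \<kappa> n * (\<Sum>k=0..n div 2. (- (tau + 2) / (4 * \<omega>)) ^ k / fact k
      * (q \<kappa> (n - 2 * k) x y / nu \<kappa> (n - 2 * k)))"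
  unfolding w_def sum_distrib_left
  by (intro sum.cong refl) (simp add: power_divide power_minus[of "tau + 2", simplified])

lemma phi_eq_nu_sum:
  "phi \<kappa> m x y = nu \<kappa> m * (\<Sum>i=0..m div 2. ((tau + 2) * norm x ^ 2 / 4) ^ i
      / (fact i * pochhammer (- 15 * \<kappa> - real m + 1/2) i)
      * (q \<kappa> (m - 2 * i) x y / nu \<kappa> (m - 2 * i)))"
  unfolding phi_def sum_distrib_left
  by (intro sum.cong refl) (simp add: power_divide power_mult_distrib mult_ac)

theorem mainTheorem7:
  fixes \<kappa> \<omega> :: real and n :: nat and x y :: "real^3"
  assumes "\<kappa> \<ge> 0" and "\<omega> > 0" and "n \<ge> 2" and "y \<in> icos"
  shows "w \<kappa> \<omega> n x y =
    (\<Sum>j = 0..n div 2. (- (tau + 2) / (4 * \<omega>)) ^ j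
        / pochhammer (15 * \<kappa> + 3/2 + real (n - 2 * j)) j
        * (nu \<kappa> n / nu \<kappa> (n - 2 * j))
        * laguerre j (15 * \<kappa> + 1/2 + real (n - 2 * j)) (\<omega> * norm x ^ 2)
        * phi \<kappa> (n - 2 * j) x y)"
proof -
  define N c s where "N = n div 2" and "c = - (tau + 2) / (4 * \<omega>)" and "s = \<omega> * norm x ^ 2"
  define \<alpha> where "\<alpha> j = 15 * \<kappa> + 1/2 + real (n - 2 * j)" for j
  define a where "a k = q \<kappa> (n - 2 * k) x y / nu \<kappa> (n - 2 * k)" for k
  have \<alpha>_step: "\<alpha> j = \<alpha> N + 2 * real (N - j)" if "j \<le> N" for j
    using that unfolding \<alpha>_def N_def by simp
  have \<alpha>_pos: "\<alpha> N > 0"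
    using \<open>\<kappa> \<ge> 0\<close> unfolding \<alpha>_def by simp
  have phi: "phi \<kappa> (n - 2 * j) x y = nu \<kappa> (n - 2 * j)
      * (\<Sum>i=0..N-j. (- c * s) ^ i / (fact i * pochhammer (1 - \<alpha> j) i) * a (j + i))" if "j \<le> N" for j
  proof -
    have "(n - 2 * j) div 2 = N - j" and "\<And>i. n - 2 * j - 2 * i = n - 2 * (j + i)"
      and "- 15 * \<kappa> - real (n - 2 * j) + 1/2 = 1 - \<alpha> j"
      unfolding N_def \<alpha>_def by auto
    moreover have "(tau + 2) * norm x ^ 2 / 4 = - c * s"
      using \<open>\<omega> > 0\<close> unfolding c_def s_def by (simp add: field_simps)
    ultimately show ?thesis
      unfolding phi_eq_nu_sum a_def by simp
  qed
  have "w \<kappa> \<omega> n x y = nu \<kappa> n * (\<Sum>k=0..N. c ^ k / fact k * a k)"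
    unfolding w_eq_nu_sum N_def c_def a_def ..
  also have "\<dots> = nu \<kappa> n * (\<Sum>j=0..N. c ^ j * (laguerre j (\<alpha> j) s / pochhammer (\<alpha> j + 1) j)
        * (\<Sum>i=0..N-j. (- c * s) ^ i / (fact i * pochhammer (1 - \<alpha> j) i) * a (j + i)))"
    using laguerre_series_inversion[OF \<alpha>_pos \<alpha>_step, of c a s] by (rule arg_cong)
  also have "\<dots> = (\<Sum>j = 0..N. c ^ j / pochhammer (\<alpha> j + 1) j * (nu \<kappa> n / nu \<kappa> (n - 2 * j))
        * laguerre j (\<alpha> j) s * phi \<kappa> (n - 2 * j) x y)"
    unfolding sum_distrib_left[of "nu \<kappa> n"]
  proof (intro sum.cong refl)
    fix j
    assume "j \<in> {0..N}"
    with phi[of j] nu_pos[OF \<open>\<kappa> \<ge> 0\<close>, of "n - 2 * j"]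
    show "nu \<kappa> n * (c ^ j * (laguerre j (\<alpha> j) s / pochhammer (\<alpha> j + 1) j)
        * (\<Sum>i=0..N-j. (- c * s) ^ i / (fact i * pochhammer (1 - \<alpha> j) i) * a (j + i)))
      = c ^ j / pochhammer (\<alpha> j + 1) j * (nu \<kappa> n / nu \<kappa> (n - 2 * j))
        * laguerre j (\<alpha> j) s * phi \<kappa> (n - 2 * j) x y"
      by simp
  qed
  finally show ?thesis
    by (simp add: N_def c_def s_def \<alpha>_def add.assoc)
qed

end
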